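(* Consider the SDP pair and one-step ADMM in the context, under the standing assumptions, and suppose $Z^{(k)}\to Z_\star=X_\star-\sigma S_\star$ where $(X_\star,y_\star,S_\star)$ is a KKT point with $\operatorname{rank}X_\star+\operatorname{rank}S_\star=n$. Suppose moreover primal nondegeneracy $\mathcal N_{X_\star}\cap\mathcal R(\mathcal A^* )=\{0\}$ and dual nondegeneracy $\mathcal N_{S_\star}\cap\mathcal N(\mathcal A)=\{0\}$ hold. Then for any $\rho\in(\|\mathcal M\|_{\mathrm{op}},1)$ there exists $\bar k_{\mathrm{ND}}\in\mathbb N$ such that for every integer $k\ge\bar k_{\mathrm{ND}}$, $\|Z^{(k+1)}-Z_\star\|_F\le\rho\|Z^{(k)}-Z_\star\|_F$.
   Context: $\mathbb S^n$: real symmetric $n\times n$ matrices, $\langle X,Y\rangle=\operatorname{tr}(XY)$, Frobenius norm $\|\cdot\|_F$; $\Pi_{\mathbb S^n_+}$ the projection onto the PSD cone. Data $C,A_1,\dots,A_m\in\mathbb S^n$, $b\in\mathbb R^m$; $\mathcal AX=(\langle A_i,X\rangle)_{i=1}^m$, $\mathcal A^*y=\sum_iy_iA_i$; $\mathcal R(\mathcal A^* )$ its range and $\mathcal N(\mathcal A)$ the null space of $\mathcal A$. Primal: minimize $\langle C,X\rangle$ s.t. $\mathcal AX=b$, $X\succeq0$; dual: maximize $b^\top y$ s.t. $\mathcal A^*y+S=C$, $S\succeq0$. KKT point: $(X,y,S)$ with $\mathcal AX=b$, $\mathcal A^*y+S=C$, $\langle X,S\rangle=0$, $X,S\succeq0$.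 Standing assumptions: $\mathcal A$ surjective and KKT set nonempty. $\mathcal P=\mathcal A^*(\mathcal A\mathcal A^* )^{-1}\mathcal A$, $\mathcal P^\perp=\mathrm{Id}-\mathcal P$. For $\sigma>0$, $Z^{(0)}\in\mathbb S^n$, one-step ADMM: $Z^{(k+1)}=\mathcal P(-2\Pi_{\mathbb S^n_+}(Z^{(k)})+Z^{(k)})+\Pi_{\mathbb S^n_+}(Z^{(k)})+\mathcal A^*(\mathcal A\mathcal A^* )^{-1}b+\sigma\mathcal PC-\sigma C$. There is an orthogonal $Q_\star$ with $Z_\star=Q_\star\operatorname{diag}(\lambda_1,\dots,\lambda_n)Q_\star^\top$, $\lambda_1\ge\dots\ge\lambda_r>0>\lambda_{r+1}\ge\dots\ge\lambda_n$, $r=\operatorname{rank}X_\star$, $X_\star=Q_\star\operatorname{diag}(\lambda_1,\dots,\lambda_r,0,\dots,0)Q_\star^\top$, $\sigma S_\star=Q_\star\operatorname{diag}(0,\dots,0,-\lambda_{r+1},\dots,-\lambda_n)Q_\star^\top$. $\mathcal N_{X_\star}=\{Q_\star\begin{pmatrix}0&0\\0&D\end{pmatrix}Q_\star^\top:D\in\mathbb S^{n-r}\}$, $\mathcal N_{S_\star}=\{Q_\star\begin{pmatrix}A&0\\0&0\end{pmatrix}Q_\star^\top:A\in\mathbb S^{r}\}$. $\Theta\in\mathbb R^{(n-r)\times r}$, $\Theta_{ij}=\lambda_j/(\lambda_j-\lambda_{i+r})$; $\Omega=\begin{pmatrix}E_r&\Theta^\top\\\Theta&0\end{pmatrix}$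 ($E_r$ all-ones). With $\circ$ the Hadamard product, $\mathcal D(H)=Q_\star(\Omega\circ(Q_\star^\top HQ_\star))Q_\star^\top$, $\mathcal D^\perp(H)=H-\mathcal D(H)$, $\mathcal M(H)=\mathcal P\mathcal D^\perp(H)+\mathcal P^\perp\mathcal D(H)$; $\|\cdot\|_{\mathrm{op}}$ is the operator norm induced by $\|\cdot\|_F$. *)

theory Defs
  imports "HOL-Analysis.Analysis"
begin

text \<open>Symmetric matrices S^n, realised as real^'n^'n with n = CARD('n).
  The Frobenius norm is the Euclidean norm on real^'n^'n.\<close>

definition symm :: "real^'n^'n \<Rightarrow> bool" where
  "symm X \<longleftrightarrow> transpose X = X"

definition psd :: "real^'n^'n \<Rightarrow> bool" where
  "psd X \<longleftrightarrow> symm X \<and> (\<forall>x. 0 \<le> x \<bullet> (X *v x))"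

definition sinner :: "real^'n^'n \<Rightarrow> real^'n^'n \<Rightarrow> real" where
  "sinner X Y = trace (X ** Y)"

definition projPSD :: "real^'n^'n \<Rightarrow> real^'n^'n" where
  "projPSD Z = (THE Y. psd Y \<and> (\<forall>W. psd W \<longrightarrow> norm (Z - Y) \<le> norm (Z - W)))"

definition Aop :: "('m::finite \<Rightarrow> real^'n^'n) \<Rightarrow> real^'n^'n \<Rightarrow> real^'m" where
  "Aop A X = (\<chi> i. sinner (A i) X)"

definition Astar :: "('m::finite \<Rightarrow> real^'n^'n) \<Rightarrow> real^'m \<Rightarrow> real^'n^'n" where
  "Astar A y = (\<Sum>i\<in>UNIV. (y $ i) *\<^sub>R A i)"

definition gram :: "('m::finite \<Rightarrow> real^'n^'n) \<Rightarrow> real^'m^'m" where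
  "gram A = (\<chi> i j. sinner (A i) (A j))"

definition Pop :: "('m::finite \<Rightarrow> real^'n^'n) \<Rightarrow> real^'n^'n \<Rightarrow> real^'n^'n" where
  "Pop A X = Astar A (matrix_inv (gram A) *v Aop A X)"

definition admm_step ::
  "('m::finite \<Rightarrow> real^'n^'n) \<Rightarrow> real^'m \<Rightarrow> real^'n^'n \<Rightarrow> real \<Rightarrow> real^'n^'n \<Rightarrow> real^'n^'n" where
  "admm_step A b C \<sigma> Z =
     Pop A (- 2 *\<^sub>R projPSD Z + Z) + projPSD Z + Astar A (matrix_inv (gram A) *v b)
     + \<sigma> *\<^sub>R Pop A C - \<sigma> *\<^sub>R C"

definition KKT ::
  "('m::finite \<Rightarrow> real^'n^'n) \<Rightarrow> real^'m \<Rightarrow> real^'n^'n \<Rightarrow> real^'n^'n \<Rightarrow> real^'m \<Rightarrow> real^'n^'n \<Rightarrow> bool" where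
  "KKT A b C X y S \<longleftrightarrow> Aop A X = b \<and> Astar A y + S = C \<and> sinner X S = 0 \<and> psd X \<and> psd S"

definition diagm :: "('n \<Rightarrow> real) \<Rightarrow> real^'n^'n" where
  "diagm f = (\<chi> i j. if i = j then f i else 0)"

definition hadamard :: "real^'n^'n \<Rightarrow> real^'n^'n \<Rightarrow> real^'n^'n" where
  "hadamard U V = (\<chi> i j. U $ i $ j * V $ i $ j)"

text \<open>Omega, with the block structure described through the index sets
  {i. lam i > 0} (first block) and {i. lam i < 0} (second block).\<close>
definition Omega :: "('n \<Rightarrow> real) \<Rightarrow> real^'n^'n" where
  "Omega lam = (\<chi> i j.
     if 0 < lam i \<and> 0 < lam j then 1
     else if lam i < 0 \<and> 0 < lam j then lam j / (lam j - lam i)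
     else if 0 < lam i \<and> lam j < 0 then lam i / (lam i - lam j)
     else 0)"

definition Dop :: "real^'n^'n \<Rightarrow> ('n \<Rightarrow> real) \<Rightarrow> real^'n^'n \<Rightarrow> real^'n^'n" where
  "Dop Q lam H = Q ** hadamard (Omega lam) (transpose Q ** H ** Q) ** transpose Q"

definition Mop ::
  "('m::finite \<Rightarrow> real^'n^'n) \<Rightarrow> real^'n^'n \<Rightarrow> ('n \<Rightarrow> real) \<Rightarrow> real^'n^'n \<Rightarrow> real^'n^'n" where
  "Mop A Q lam H = Pop A (H - Dop Q lam H) + (Dop Q lam H - Pop A (Dop Q lam H))"

definition opnorm_sym :: "(real^'n^'n \<Rightarrow> real^'n^'n) \<Rightarrow> real" where
  "opnorm_sym T = Sup {norm (T H) | H. symm H \<and> norm H = 1}"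

definition NX :: "real^'n^'n \<Rightarrow> ('n \<Rightarrow> real) \<Rightarrow> (real^'n^'n) set" where
  "NX Q lam = {Q ** D ** transpose Q | D. symm D \<and>
                 (\<forall>i j. \<not> (lam i < 0 \<and> lam j < 0) \<longrightarrow> D $ i $ j = 0)}"

definition NS :: "real^'n^'n \<Rightarrow> ('n \<Rightarrow> real) \<Rightarrow> (real^'n^'n) set" where
  "NS Q lam = {Q ** D ** transpose Q | D. symm D \<and>
                 (\<forall>i j. \<not> (0 < lam i \<and> 0 < lam j) \<longrightarrow> D $ i $ j = 0)}"

end

theory Submission
  imports Defs
begin

(* Since the ADMM map T is continuous, the limit Z_star = X_star - sigma S_star is a fixed point of T.
   Writing an iterate as Z_star + H, linearity of P gives
     T (Z_star + H) - Z_star = M H + (I - 2 P) R(H),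
   where R(H) = Pi(Z_star + H) - X_star - D H is the remainder of the first-order expansion of the
   projection Pi onto the PSD cone at Z_star.  The projection Y of a symmetric matrix Z satisfies
   Y (Z - Y) = 0; in the eigenbasis Q of Z_star this becomes, entry by entry, a linear equation for
   Q^T (Y - X_star) Q whose solution is Omega o (Q^T H Q) up to a product of two perturbations of
   size O(|H|).  As no eigenvalue of Z_star vanishes, |R(H)| <= 2 |H|^2 / min_i |lambda_i|.  Hence
   |H_(k+1)| <= |M| |H_k| + c |H_k|^2, and since H_k -> 0 the quadratic term is eventually absorbed
   into (rho - |M|) |H_k|. *)

lemma fixed_point_of_convergent_orbit:
  fixes f :: "'a::t2_space \<Rightarrow> 'a"
  assumes "continuous_on UNIV f" and "\<And>k. x (Suc k) = f (x k)" and "x \<longlonglongrightarrow> l"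
  shows "f l = l"
proof -
  have "(\<lambda>k. f (x k)) \<longlonglongrightarrow> f l"
    using continuous_on_tendsto_compose[OF assms(1,3)] by (simp add: o_def)
  moreover have "(\<lambda>k. f (x k)) \<longlonglongrightarrow> l"
    using LIMSEQ_Suc[OF assms(3)] by (simp add: assms(2))
  ultimately show ?thesis
    by (rule LIMSEQ_unique)
qed

lemma eventually_contraction_of_quadratic_error:
  fixes x :: "nat \<Rightarrow> 'a::real_normed_vector"
  assumes "x \<longlonglongrightarrow> l" and "a < \<rho>"
    and err: "\<And>k. norm (x (Suc k) - l) \<le> a * norm (x k - l) + c * (norm (x k - l))\<^sup>2"
  shows "\<exists>N. \<forall>k\<ge>N. norm (x (Suc k) - l) \<le> \<rho> * norm (x k - l)"
proof -
  have "(\<lambda>k. c * norm (x k - l)) \<longlonglongrightarrow> 0"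
    using assms(1) by (intro tendsto_mult_right_zero tendsto_norm_zero) (simp add: LIM_zero)
  then have "\<forall>\<^sub>F k in sequentially. c * norm (x k - l) < \<rho> - a"
    using assms(2) by (intro order_tendstoD(2)) auto
  then obtain N where N: "\<And>k. k \<ge> N \<Longrightarrow> c * norm (x k - l) < \<rho> - a"
    by (auto simp: eventually_sequentially)
  have "norm (x (Suc k) - l) \<le> \<rho> * norm (x k - l)" if "k \<ge> N" for k
  proof -
    have "norm (x (Suc k) - l) \<le> a * norm (x k - l) + (c * norm (x k - l)) * norm (x k - l)"
      using err[of k] by (simp add: power2_eq_square mult.assoc)
    also have "\<dots> \<le> a * norm (x k - l) + (\<rho> - a) * norm (x k - l)"
      using N[OF that] by (intro add_left_mono mult_right_mono) auto
    finally show ?thesis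
      by (simp add: algebra_simps)
  qed
  then show ?thesis
    by blast
qed

section \<open>Matrix algebra and the Frobenius norm\<close>

lemma matrix_add_rdistrib: "((A::real^'n^'m) + B) ** C = A ** C + B ** C"
  by (simp add: matrix_matrix_mult_def vec_eq_iff sum.distrib distrib_right)

lemma matrix_diff_ldistrib: "(A::real^'n^'m) ** (B - C) = A ** B - A ** C"
  by (simp add: matrix_matrix_mult_def vec_eq_iff sum_subtractf right_diff_distrib)

lemma matrix_diff_rdistrib: "((A::real^'n^'m) - B) ** C = A ** C - B ** C"
  by (simp add: matrix_matrix_mult_def vec_eq_iff sum_subtractf left_diff_distrib)

lemma matrix_mult_scaleR_left: "(c *\<^sub>R (A::real^'n^'m)) ** B = c *\<^sub>R (A ** B)"
  by (simp add: matrix_matrix_mult_def vec_eq_iff sum_distrib_left mult_ac)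

lemma matrix_mult_scaleR_right: "(A::real^'n^'m) ** (c *\<^sub>R B) = c *\<^sub>R (A ** B)"
  by (simp add: matrix_matrix_mult_def vec_eq_iff sum_distrib_left mult_ac)

lemma scaleR_matrix_vector_mult: "(c *\<^sub>R (A::real^'n^'m)) *v x = c *\<^sub>R (A *v x)"
  by (simp add: matrix_vector_mult_def vec_eq_iff sum_distrib_left mult_ac)

lemma transpose_add: "transpose ((A::real^'n^'m) + B) = transpose A + transpose B"
  by (simp add: transpose_def vec_eq_iff)

lemma transpose_diff: "transpose ((A::real^'n^'m) - B) = transpose A - transpose B"
  by (simp add: transpose_def vec_eq_iff)

lemma trace_scaleR: "trace (c *\<^sub>R (A::real^'n^'n)) = c * trace A"
  by (simp add: trace_def sum_distrib_left)

lemma inner_eq_trace: "(A::real^'n^'m) \<bullet> B = trace (transpose A ** B)"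
  by (simp add: inner_vec_def trace_def matrix_matrix_mult_def transpose_def) (rule sum.swap)

lemma transpose_diagm: "transpose (diagm f) = diagm f"
  by (simp add: diagm_def transpose_def vec_eq_iff)

lemma diagm_mult_nth: "(diagm f ** A) $ i $ j = f i * A $ i $ j"
  by (simp add: diagm_def matrix_matrix_mult_def if_distrib if_distribR sum.delta cong: if_cong)

lemma mult_diagm_nth: "(A ** diagm f) $ i $ j = A $ i $ j * f j"
  by (simp add: diagm_def matrix_matrix_mult_def if_distrib if_distribR sum.delta' cong: if_cong)

lemma diagm_mult_diagm: "diagm f ** diagm g = diagm (\<lambda>i. f i * g i)"
  by (simp add: vec_eq_iff diagm_mult_nth) (simp add: diagm_def)

lemma diagm_diff: "diagm f - diagm g = diagm (\<lambda>i. f i - g i)"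
  by (simp add: diagm_def vec_eq_iff)

lemma hadamard_add_right: "hadamard U (V + W) = hadamard U V + hadamard U W"
  by (simp add: hadamard_def vec_eq_iff distrib_left)

lemma hadamard_scaleR_right: "hadamard U (c *\<^sub>R V) = c *\<^sub>R hadamard U V"
  by (simp add: hadamard_def vec_eq_iff)

lemma orthogonal_conj_mult:
  assumes "orthogonal_matrix (Q::real^'n^'n)"
  shows "transpose Q ** (A ** B) ** Q = (transpose Q ** A ** Q) ** (transpose Q ** B ** Q)"
proof -
  have "(transpose Q ** A ** Q) ** (transpose Q ** B ** Q)
      = transpose Q ** A ** ((Q ** transpose Q) ** (B ** Q))"
    by (simp only: matrix_mul_assoc)
  also have "\<dots> = transpose Q ** (A ** B) ** Q"
    using assms by (simp add: orthogonal_matrix_def matrix_mul_assoc)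
  finally show ?thesis ..
qed

lemma orthogonal_conj_inverse:
  assumes "orthogonal_matrix (Q::real^'n^'n)"
  shows "Q ** (transpose Q ** A ** Q) ** transpose Q = A"
proof -
  have "Q ** (transpose Q ** A ** Q) ** transpose Q = (Q ** transpose Q) ** A ** (Q ** transpose Q)"
    by (simp add: matrix_mul_assoc)
  then show ?thesis
    using assms by (simp add: orthogonal_matrix_def)
qed

lemma norm_transpose: "norm (transpose (A::real^'n^'m)) = norm A"
proof -
  have "transpose A \<bullet> transpose A = A \<bullet> A"
    by (simp add: inner_vec_def transpose_def) (rule sum.swap)
  then show ?thesis by (simp add: norm_eq_sqrt_inner)
qed

lemma norm_matrix_vector_mult_le: "norm ((M::real^'n^'m) *v x) \<le> norm M * norm x"
proof -
  have "norm (M *v x) = L2_set (\<lambda>k. \<bar>M $ k \<bullet> x\<bar>) UNIV"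
    by (simp add: norm_vec_def matrix_vector_mul_component)
  also have "\<dots> \<le> L2_set (\<lambda>k. norm (M $ k) * norm x) UNIV"
    by (intro L2_set_mono Cauchy_Schwarz_ineq2) auto
  also have "\<dots> = norm M * norm x"
    by (simp add: norm_vec_def L2_set_right_distrib mult.commute)
  finally show ?thesis .
qed

lemma norm_matrix_mult_le: "norm ((A::real^'n^'m) ** B) \<le> norm A * norm B"
proof -
  have "(A ** B) $ i = transpose B *v A $ i" for i
    by (simp add: matrix_matrix_mult_def matrix_vector_mult_def transpose_def vec_eq_iff mult.commute)
  then have "norm (A ** B) = L2_set (\<lambda>i. norm (transpose B *v A $ i)) UNIV"
    by (simp add: norm_vec_def)
  also have "\<dots> \<le> L2_set (\<lambda>i. norm B * norm (A $ i)) UNIV"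
    using norm_matrix_vector_mult_le[of "transpose B"]
    by (intro L2_set_mono) (simp_all only: norm_transpose norm_ge_zero)
  also have "\<dots> = norm B * norm A"
    by (simp add: L2_set_right_distrib norm_vec_def[of A])
  finally show ?thesis by (simp only: mult.commute)
qed

lemma norm_le_norm_entrywise:
  assumes "\<And>i j. \<bar>(A::real^'n^'m) $ i $ j\<bar> \<le> \<bar>B $ i $ j\<bar>"
  shows "norm A \<le> norm B"
  unfolding norm_vec_def by (intro L2_set_mono) (auto simp: norm_vec_def intro: L2_set_mono assms)

lemma norm_orthogonal_conj:
  assumes "orthogonal_matrix (Q::real^'n^'n)"
  shows "norm (transpose Q ** X ** Q) = norm X"
proof -
  have QQt: "Q ** transpose Q = mat 1"
    using assms by (simp add: orthogonal_matrix_def)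
  have "transpose (transpose Q ** X ** Q) ** (transpose Q ** X ** Q)
      = transpose Q ** transpose X ** (Q ** transpose Q) ** X ** Q"
    by (simp add: matrix_transpose_mul matrix_mul_assoc)
  also have "\<dots> = transpose Q ** (transpose X ** X ** Q)"
    by (simp only: QQt matrix_mul_rid matrix_mul_assoc)
  finally have "(transpose Q ** X ** Q) \<bullet> (transpose Q ** X ** Q)
      = trace (transpose Q ** (transpose X ** X ** Q))"
    by (simp only: inner_eq_trace)
  also have "\<dots> = trace (transpose X ** X ** Q ** transpose Q)"
    by (rule trace_mul_sym)
  also have "\<dots> = X \<bullet> X"
    by (simp add: inner_eq_trace QQt flip: matrix_mul_assoc)
  finally show ?thesis by (simp add: norm_eq_sqrt_inner)
qed

lemma symm_add: "symm A \<Longrightarrow> symm B \<Longrightarrow> symm (A + B)"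
  by (simp add: symm_def transpose_add)

lemma symm_diff: "symm A \<Longrightarrow> symm B \<Longrightarrow> symm (A - B)"
  by (simp add: symm_def transpose_diff)

lemma symm_scaleR: "symm A \<Longrightarrow> symm (c *\<^sub>R A)"
  by (simp add: symm_def transpose_scalar)

lemma symm_conj: "symm Y \<Longrightarrow> symm (B ** Y ** transpose B)"
  by (simp add: symm_def matrix_transpose_mul matrix_mul_assoc)

lemma psd_conj: "psd Y \<Longrightarrow> psd (B ** Y ** transpose B)"
  unfolding psd_def
  by (simp add: symm_conj flip: matrix_vector_mul_assoc)
     (metis dot_lmul_matrix transpose_matrix_vector)

lemma psd_diagm: "(\<And>i. 0 \<le> f i) \<Longrightarrow> psd (diagm f)"
  unfolding psd_def symm_def transpose_diagm
  by (auto simp: inner_vec_def matrix_vector_mult_def diagm_def if_distrib if_distribR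
      sum.delta' mult.left_commute cong: if_cong intro!: sum_nonneg)

lemma psd_0: "psd 0"
  using psd_diagm[of "\<lambda>_. 0"] by (simp add: diagm_def zero_vec_def)

lemma psd_nth_diag_nonneg: "psd V \<Longrightarrow> 0 \<le> V $ i $ i"
proof -
  have "axis i 1 \<bullet> (V *v axis i 1) = (V *v axis i 1) $ i"
    by (simp add: inner_axis')
  also have "\<dots> = V $ i $ i"
    by (simp add: matrix_vector_mult_def axis_def if_distrib cong: if_cong)
  finally have "axis i 1 \<bullet> (V *v axis i 1) = V $ i $ i" .
  then show "psd V \<Longrightarrow> 0 \<le> V $ i $ i"
    unfolding psd_def by metis
qed

lemma inner_diagm_conj_psd_nonneg:
  assumes "\<And>i. 0 \<le> f i" and "psd W"
  shows "0 \<le> (B ** diagm f ** transpose B) \<bullet> W"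
proof -
  have "(B ** diagm f ** transpose B) \<bullet> W = trace (B ** (diagm f ** transpose B ** W))"
    by (simp add: inner_eq_trace matrix_transpose_mul transpose_diagm matrix_mul_assoc)
  also have "\<dots> = trace (diagm f ** (transpose B ** W ** B))"
    by (subst trace_mul_sym) (simp add: matrix_mul_assoc)
  also have "\<dots> = (\<Sum>i\<in>UNIV. f i * (transpose B ** W ** B) $ i $ i)"
    by (simp add: trace_def diagm_mult_nth)
  also have "\<dots> \<ge> 0"
    using psd_conj[OF \<open>psd W\<close>, of "transpose B"]
    by (intro sum_nonneg mult_nonneg_nonneg assms(1) psd_nth_diag_nonneg) simp
  finally show ?thesis .
qed

lemma convex_psd: "convex {Y. psd Y}"
  unfolding convex_def psd_def symm_def
  by (auto simp: transpose_add transpose_scalar matrix_vector_mult_add_rdistrib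
      scaleR_matrix_vector_mult inner_add_right intro!: add_nonneg_nonneg mult_nonneg_nonneg)

lemma closed_psd: "closed {Y::real^'n^'n. psd Y}"
proof -
  have "{Y::real^'n^'n. psd Y} = {Y. transpose Y = Y} \<inter> (\<Inter>x. {Y. 0 \<le> x \<bullet> (Y *v x)})"
    by (auto simp: psd_def symm_def)
  moreover have "bounded_linear (transpose :: real^'n^'n \<Rightarrow> _)"
    by (auto simp: transpose_add transpose_scalar linear_conv_bounded_linear[symmetric] intro!: linearI)
  moreover have "bounded_linear (\<lambda>Y::real^'n^'n. Y *v x)" for x
    by (auto simp: matrix_vector_mult_add_rdistrib scaleR_matrix_vector_mult
        linear_conv_bounded_linear[symmetric] intro!: linearI)
  ultimately show ?thesis
    by (auto intro!: closed_Int closed_INT closed_Collect_eq closed_Collect_le continuous_intros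
        simp: linear_continuous_on)
qed

section \<open>The projection onto the PSD cone\<close>

lemma closest_point_eqI:
  fixes a y :: "'a::{real_inner,heine_borel}"
  assumes "convex S" "closed S" "y \<in> S" and obtuse: "\<And>w. w \<in> S \<Longrightarrow> (a - y) \<bullet> (w - y) \<le> 0"
  shows "closest_point S a = y"
proof -
  have "dist a y \<le> dist a w" if "w \<in> S" for w
  proof -
    have "(norm (a - w))\<^sup>2 = (norm (a - y))\<^sup>2 - 2 * ((a - y) \<bullet> (w - y)) + (norm (w - y))\<^sup>2"
      by (simp add: power2_norm_eq_inner algebra_simps inner_commute)
    then have "(norm (a - y))\<^sup>2 \<le> (norm (a - w))\<^sup>2"
      using obtuse[OF that] by (smt (verit) zero_le_power2)
    then show ?thesis by (simp add: dist_norm power2_le_iff_abs_le)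
  qed
  then show ?thesis using closest_point_unique[OF assms(1-3)] by auto
qed

lemma projPSD_eq_closest_point: "projPSD Z = closest_point {Y. psd Y} Z"
  unfolding projPSD_def
proof (rule the_equality)
  show "psd (closest_point {Y. psd Y} Z) \<and>
      (\<forall>W. psd W \<longrightarrow> norm (Z - closest_point {Y. psd Y} Z) \<le> norm (Z - W))"
    using closest_point_in_set[OF closed_psd, of Z] closest_point_le[OF closed_psd, of _ Z] psd_0
    by (auto simp: dist_norm)
next
  fix Y assume "psd Y \<and> (\<forall>W. psd W \<longrightarrow> norm (Z - Y) \<le> norm (Z - W))"
  then show "Y = closest_point {Y. psd Y} Z"
    by (intro closest_point_unique[OF convex_psd closed_psd]) (auto simp: dist_norm)
qed

lemma psd_projPSD: "psd (projPSD Z)"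
  using closest_point_in_set[OF closed_psd, of Z] psd_0
  by (auto simp: projPSD_eq_closest_point)

lemma projPSD_nonexpansive: "norm (projPSD Z - projPSD Z') \<le> norm (Z - Z')"
  using closest_point_lipschitz[OF convex_psd closed_psd, of Z Z'] psd_0
  by (auto simp: projPSD_eq_closest_point dist_norm)

lemma projPSD_dot: "psd W \<Longrightarrow> (Z - projPSD Z) \<bullet> (W - projPSD Z) \<le> 0"
  using closest_point_dot[OF convex_psd closed_psd, of W Z] by (simp add: projPSD_eq_closest_point)

lemma continuous_on_projPSD: "continuous_on S projPSD"
  using continuous_on_closest_point[OF convex_psd closed_psd] psd_0
  by (auto simp: projPSD_eq_closest_point[abs_def])

lemma projPSD_eqI: "psd Y \<Longrightarrow> (\<And>W. psd W \<Longrightarrow> (Z - Y) \<bullet> (W - Y) \<le> 0) \<Longrightarrow> projPSD Z = Y"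
  unfolding projPSD_eq_closest_point by (rule closest_point_eqI[OF convex_psd closed_psd]) auto

lemma linear_coeff_eq_0_if_quadratic_nonpos:
  fixes a b :: real
  assumes "\<And>t. t * a + t\<^sup>2 * b \<le> 0"
  shows "a = 0"
proof (rule ccontr)
  assume "a \<noteq> 0"
  define t where "t = a / (\<bar>b\<bar> + 1)"
  have "a = t * (\<bar>b\<bar> + 1)" and "t \<noteq> 0"
    using \<open>a \<noteq> 0\<close> by (simp_all add: t_def add_pos_nonneg)
  then have "t * a + t\<^sup>2 * b = t\<^sup>2 * (\<bar>b\<bar> + b + 1)"
    by (simp add: power2_eq_square algebra_simps)
  moreover have "0 < t\<^sup>2 * (\<bar>b\<bar> + b + 1)"
    using \<open>t \<noteq> 0\<close> by (intro mult_pos_pos) auto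
  ultimately show False
    using assms[of t] by linarith
qed

(* (I + t K) Y (I + t K)^T is PSD for every t, so the coefficient of t in the variational inequality
   of the projection vanishes; for K = G Y this coefficient is 2 |Y G|^2. *)
lemma projPSD_mult_residual:
  fixes Z :: "real^'n^'n"
  assumes "symm Z"
  shows "projPSD Z ** (Z - projPSD Z) = 0"
proof -
  define Y where "Y = projPSD Z"
  define G where "G = Z - Y"
  have Y: "transpose Y = Y"
    using psd_projPSD[of Z] by (simp add: Y_def psd_def symm_def)
  have G: "transpose G = G"
    using assms Y by (simp add: G_def symm_def transpose_diff)
  define K where "K = G ** Y"
  have "t * (G \<bullet> (K ** Y + Y ** transpose K)) + t\<^sup>2 * (G \<bullet> (K ** Y ** transpose K)) \<le> 0" for t
  proof -
    define B where "B = mat 1 + t *\<^sub>R K"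
    have "B ** Y ** transpose B = Y + t *\<^sub>R (K ** Y + Y ** transpose K) + t\<^sup>2 *\<^sub>R (K ** Y ** transpose K)"
      by (simp add: B_def transpose_add transpose_scalar matrix_add_rdistrib matrix_add_ldistrib
          matrix_mult_scaleR_left matrix_mult_scaleR_right matrix_mul_assoc power2_eq_square algebra_simps)
    moreover have "G \<bullet> (B ** Y ** transpose B - Y) \<le> 0"
      using projPSD_dot[OF psd_conj[OF psd_projPSD], of Z B] by (simp add: G_def Y_def)
    ultimately show ?thesis
      by (simp add: inner_add_right)
  qed
  then have "G \<bullet> (K ** Y + Y ** transpose K) = 0"
    by (rule linear_coeff_eq_0_if_quadratic_nonpos)
  moreover have "G \<bullet> (K ** Y + Y ** transpose K) = 2 * ((Y ** G) \<bullet> (Y ** G))"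
  proof -
    have "G \<bullet> (K ** Y) = trace (G ** Y ** Y ** G)"
      by (subst trace_mul_sym) (simp add: K_def inner_eq_trace G matrix_mul_assoc)
    moreover have "G \<bullet> (Y ** transpose K) = trace (G ** Y ** Y ** G)"
      by (simp add: K_def inner_eq_trace G Y matrix_transpose_mul matrix_mul_assoc)
    moreover have "(Y ** G) \<bullet> (Y ** G) = trace (G ** Y ** Y ** G)"
      by (simp add: inner_eq_trace G Y matrix_transpose_mul matrix_mul_assoc)
    ultimately show ?thesis
      by (simp add: inner_add_right)
  qed
  ultimately show ?thesis
    by (simp add: Y_def G_def)
qed

lemma projPSD_residual_anticomm:
  assumes "symm Z"
  shows "projPSD Z ** (Z - projPSD Z) + (Z - projPSD Z) ** projPSD Z = 0"
proof -
  have "symm (projPSD Z)"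
    using psd_projPSD unfolding psd_def by blast
  then have "(Z - projPSD Z) ** projPSD Z = transpose (projPSD Z ** (Z - projPSD Z))"
    using assms by (simp add: symm_def matrix_transpose_mul transpose_diff)
  then show ?thesis
    using projPSD_mult_residual[OF assms] by (simp add: transpose_def vec_eq_iff)
qed

definition pos_part :: "('a \<Rightarrow> real) \<Rightarrow> 'a \<Rightarrow> real" where
  "pos_part f = (\<lambda>i. if 0 < f i then f i else 0)"

definition neg_part :: "('a \<Rightarrow> real) \<Rightarrow> 'a \<Rightarrow> real" where
  "neg_part f = (\<lambda>i. if f i < 0 then - f i else 0)"

lemma pos_part_diff_self: "(\<lambda>i. pos_part f i - f i) = neg_part f"
  by (auto simp: pos_part_def neg_part_def)

lemma neg_part_mult_pos_part: "neg_part f i * pos_part f i = 0"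
  by (simp add: pos_part_def neg_part_def)

lemma pos_part_add_neg_part: "pos_part f i + neg_part f i = \<bar>f i\<bar>"
  by (simp add: pos_part_def neg_part_def)

lemma projPSD_eigen:
  fixes Q :: "real^'n^'n"
  assumes "orthogonal_matrix Q"
  shows "projPSD (Q ** diagm lam ** transpose Q) = Q ** diagm (pos_part lam) ** transpose Q"
    (is "projPSD ?Z = ?Y")
proof (rule projPSD_eqI)
  let ?N = "Q ** diagm (neg_part lam) ** transpose Q"
  have pos: "0 \<le> pos_part lam i" and neg: "0 \<le> neg_part lam i" for i
    by (simp_all add: pos_part_def neg_part_def)
  show "psd ?Y"
    by (intro psd_conj psd_diagm pos)
  have "?Y - ?Z = ?N"
    by (simp add: diagm_diff pos_part_diff_self flip: matrix_diff_ldistrib matrix_diff_rdistrib)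
  then have Z: "?Z - ?Y = - ?N"
    by (metis minus_diff_eq)
  have "?N \<bullet> ?Y
      = trace (Q ** (diagm (neg_part lam) ** (transpose Q ** Q) ** diagm (pos_part lam)) ** transpose Q)"
    by (simp add: inner_eq_trace matrix_transpose_mul transpose_diagm matrix_mul_assoc)
  also have "\<dots> = 0"
    using assms by (simp add: orthogonal_matrix_def diagm_mult_diagm neg_part_mult_pos_part)
      (simp add: diagm_def trace_def flip: zero_vec_def)
  finally have NY: "?N \<bullet> ?Y = 0" .
  fix W :: "real^'n^'n" assume "psd W"
  then have "0 \<le> ?N \<bullet> W"
    by (intro inner_diagm_conj_psd_nonneg neg)
  then show "(?Z - ?Y) \<bullet> (W - ?Y) \<le> 0"
    by (simp add: Z inner_diff_right NY)
qed

section \<open>Second-order expansion of the projection\<close>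

lemma Omega_nth:
  assumes "lam i \<noteq> 0" "lam j \<noteq> 0"
  shows "Omega lam $ i $ j = (pos_part lam i + pos_part lam j) / (\<bar>lam i\<bar> + \<bar>lam j\<bar>)"
  using assms by (auto simp: Omega_def pos_part_def)

lemma diagm_perturbation_anticommutator_nth:
  fixes E F :: "real^'n^'n"
  assumes "\<And>i. q i * p i = 0"
  shows "((diagm p + E) ** (F - diagm q) + (F - diagm q) ** (diagm p + E)) $ i $ j
    = (p i + p j) * F $ i $ j - (q i + q j) * E $ i $ j + (E ** F + F ** E) $ i $ j"
proof -
  have "diagm q ** diagm p = 0" "diagm p ** diagm q = 0"
    unfolding diagm_mult_diagm assms mult.commute[of "p _"] by (simp_all add: diagm_def vec_eq_iff)
  then have expand: "(diagm p + E) ** (F - diagm q) + (F - diagm q) ** (diagm p + E)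
      = (diagm p ** F + F ** diagm p) - (E ** diagm q + diagm q ** E) + (E ** F + F ** E)"
    by (simp add: matrix_add_rdistrib matrix_add_ldistrib matrix_diff_ldistrib matrix_diff_rdistrib)
  show ?thesis
    unfolding expand by (simp add: diagm_mult_nth mult_diagm_nth algebra_simps)
qed

(* In the eigenbasis of Z_star, diagm (pos_part lam) + E will be the projection of Z_star + H and
   F - diagm (neg_part lam) its residual.  Using their product in both orders makes the equation for
   every entry solvable by the single formula of Omega_nth. *)
lemma hadamard_Omega_error:
  fixes E F :: "real^'n^'n"
  assumes lam: "\<And>i. lam i \<noteq> 0" and m: "0 < m" "\<And>i. m \<le> \<bar>lam i\<bar>"
    and anticomm: "(diagm (pos_part lam) + E) ** (F - diagm (neg_part lam))
      + (F - diagm (neg_part lam)) ** (diagm (pos_part lam) + E) = 0"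
  shows "norm (E - hadamard (Omega lam) (E + F)) \<le> norm E * norm F / m"
proof -
  define T where "T = E ** F + F ** E"
  have "norm (E - hadamard (Omega lam) (E + F)) \<le> norm ((1 / (2 * m)) *\<^sub>R T)"
  proof (rule norm_le_norm_entrywise)
    fix i j
    let ?c = "\<bar>lam i\<bar> + \<bar>lam j\<bar>"
    have c: "2 * m \<le> ?c"
      using m(2)[of i] m(2)[of j] by linarith
    have "(pos_part lam i + pos_part lam j) * F $ i $ j - (neg_part lam i + neg_part lam j) * E $ i $ j
        + T $ i $ j = 0"
      using arg_cong[OF anticomm, of "\<lambda>M. M $ i $ j"]
      by (simp only: diagm_perturbation_anticommutator_nth neg_part_mult_pos_part T_def) simp
    then have entry: "?c * E $ i $ j - (pos_part lam i + pos_part lam j) * (E + F) $ i $ j = T $ i $ j"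
      by (simp add: pos_part_add_neg_part[symmetric] algebra_simps)
    have "(E - hadamard (Omega lam) (E + F)) $ i $ j
        = (?c * E $ i $ j - (pos_part lam i + pos_part lam j) * (E + F) $ i $ j) / ?c"
      using c m(1) by (simp add: hadamard_def Omega_nth lam field_simps)
    also have "\<dots> = T $ i $ j / ?c"
      by (simp only: entry)
    also have "\<bar>\<dots>\<bar> \<le> \<bar>T $ i $ j\<bar> / (2 * m)"
      using c m(1) by (simp add: abs_divide divide_left_mono)
    finally show "\<bar>(E - hadamard (Omega lam) (E + F)) $ i $ j\<bar> \<le> \<bar>((1 / (2 * m)) *\<^sub>R T) $ i $ j\<bar>"
      using m(1) by (simp add: abs_mult)
  qed
  also have "\<dots> = norm T / (2 * m)"
    using m(1) by simp
  also have "\<dots> \<le> (norm E * norm F + norm F * norm E) / (2 * m)"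
    using m(1) norm_triangle_le[OF add_mono[OF norm_matrix_mult_le[of E F] norm_matrix_mult_le[of F E]]]
    by (intro divide_right_mono) (simp_all add: T_def)
  finally show ?thesis
    using m(1) by (simp add: mult.commute)
qed

lemma projPSD_second_order:
  fixes Q H :: "real^'n^'n"
  assumes Q: "orthogonal_matrix Q" and lam: "\<And>i. lam i \<noteq> 0"
    and m: "0 < m" "\<And>i. m \<le> \<bar>lam i\<bar>" and H: "symm H"
  shows "norm (projPSD (Q ** diagm lam ** transpose Q + H) - Q ** diagm (pos_part lam) ** transpose Q
           - Dop Q lam H) \<le> 2 * (norm H)\<^sup>2 / m"
proof -
  define Zs where "Zs = Q ** diagm lam ** transpose Q"
  define Xs where "Xs = Q ** diagm (pos_part lam) ** transpose Q"
  define Y where "Y = projPSD (Zs + H)"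
  define G where "G = Zs + H - Y"
  define cj where "cj X = transpose Q ** X ** Q" for X
  have cj_add: "cj (A + B) = cj A + cj B" and cj_diff: "cj (A - B) = cj A - cj B" for A B
    by (simp_all add: cj_def matrix_add_ldistrib matrix_add_rdistrib matrix_diff_ldistrib
        matrix_diff_rdistrib)
  have cj_diagm: "cj (Q ** diagm f ** transpose Q) = diagm f" for f
    using orthogonal_conj_inverse[of "transpose Q"] Q by (simp add: cj_def)
  have Zs: "symm Zs"
    unfolding Zs_def by (intro symm_conj) (simp add: symm_def transpose_diagm)
  have "cj Y ** cj G + cj G ** cj Y = cj (Y ** G + G ** Y)"
    unfolding cj_add by (simp add: cj_def orthogonal_conj_mult[OF Q])
  also have "\<dots> = 0"
    using projPSD_residual_anticomm[OF symm_add[OF Zs H]] by (simp add: cj_def Y_def G_def)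
  finally have anticomm: "cj Y ** cj G + cj G ** cj Y = 0" .
  define E where "E = cj (Y - Xs)"
  define F where "F = cj H - E"
  have cjY: "cj Y = diagm (pos_part lam) + E"
    by (simp add: E_def cj_diff Xs_def cj_diagm)
  have "cj G = cj H - E - (diagm (pos_part lam) - diagm lam)"
    by (simp add: G_def cj_add cj_diff cjY Zs_def cj_diagm algebra_simps)
  then have cjG: "cj G = F - diagm (neg_part lam)"
    by (simp add: F_def diagm_diff pos_part_diff_self)
  have "norm (Y - Xs - Dop Q lam H) = norm (E - hadamard (Omega lam) (E + F))"
  proof -
    have "Y - Xs - Dop Q lam H = Q ** (E - hadamard (Omega lam) (E + F)) ** transpose Q"
      using orthogonal_conj_inverse[OF Q]
      by (simp add: E_def F_def Dop_def cj_def matrix_diff_ldistrib matrix_diff_rdistrib)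
    then show ?thesis
      using norm_orthogonal_conj[of "transpose Q"] Q by simp
  qed
  also have "\<dots> \<le> norm E * norm F / m"
    by (rule hadamard_Omega_error[OF lam m]) (use anticomm in \<open>simp add: cjY cjG\<close>)
  also have "\<dots> \<le> norm H * (2 * norm H) / m"
  proof -
    have "projPSD Zs = Xs"
      using projPSD_eigen[OF Q] by (simp add: Zs_def Xs_def)
    then have E: "norm E \<le> norm H"
      using projPSD_nonexpansive[of "Zs + H" Zs] norm_orthogonal_conj[OF Q]
      by (simp add: E_def Y_def cj_def)
    moreover have "norm F \<le> 2 * norm H"
      using norm_triangle_ineq4[of "cj H" E] norm_orthogonal_conj[OF Q, of H] E
      by (simp add: F_def cj_def)
    ultimately show ?thesis
      using m(1) by (intro divide_right_mono mult_mono) auto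
  qed
  finally show ?thesis
    by (simp add: Y_def Zs_def Xs_def power2_eq_square mult.left_commute)
qed

section \<open>Local behaviour of the ADMM map\<close>

lemma linear_Aop: "linear (Aop A)"
  by (rule linearI)
    (simp_all add: Aop_def sinner_def vec_eq_iff matrix_add_ldistrib trace_add matrix_mult_scaleR_right
      trace_scaleR)

lemma linear_Astar: "linear (Astar A)"
  by (rule linearI) (simp_all add: Astar_def scaleR_add_left sum.distrib scaleR_sum_right)

lemma linear_Pop: "linear (Pop A)"
proof -
  have "linear (Astar A \<circ> (\<lambda>v. matrix_inv (gram A) *v v) \<circ> Aop A)"
    by (intro linear_compose linear_Aop linear_Astar matrix_vector_mul_linear)
  then show ?thesis
    by (simp add: Pop_def[abs_def] o_def)
qed

lemma linear_Dop: "linear (Dop Q lam)"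
  by (rule linearI)
    (simp_all add: Dop_def hadamard_add_right hadamard_scaleR_right matrix_add_ldistrib
      matrix_add_rdistrib matrix_mult_scaleR_left matrix_mult_scaleR_right)

lemma linear_Mop: "linear (Mop A Q lam)"
  using linear_Pop[of A] linear_Dop[of Q lam]
  by (intro linearI) (simp_all add: Mop_def linear_add linear_diff linear_scale algebra_simps)

lemma norm_le_opnorm_sym:
  assumes "linear f" and "symm H"
  shows "norm (f H) \<le> opnorm_sym f * norm H"
proof (cases "H = 0")
  case True
  then show ?thesis
    using linear_0[OF assms(1)] by simp
next
  case False
  obtain c where c: "\<And>X. norm (f X) \<le> norm X * c"
    using assms(1) bounded_linear.bounded linear_conv_bounded_linear by blast
  have "norm (f ((1 / norm H) *\<^sub>R H)) \<in> {norm (f H) | H. symm H \<and> norm H = 1}"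
    using assms(2) False by (auto simp: symm_scaleR)
  moreover have "bdd_above {norm (f H) | H. symm H \<and> norm H = 1}"
  proof (rule bdd_aboveI)
    fix x assume "x \<in> {norm (f H) | H. symm H \<and> norm H = 1}"
    then obtain H where "x = norm (f H)" "norm H = 1"
      by blast
    then show "x \<le> c"
      using c[of H] by simp
  qed
  ultimately have "norm (f ((1 / norm H) *\<^sub>R H)) \<le> opnorm_sym f"
    unfolding opnorm_sym_def by (rule cSup_upper)
  then show ?thesis
    using False by (simp add: linear_scale[OF assms(1)] divide_le_eq mult.commute)
qed

lemma symm_Astar: "(\<And>i. symm (A i)) \<Longrightarrow> symm (Astar A y)"
  by (simp add: symm_def Astar_def transpose_def vec_eq_iff sum_component)

lemma symm_admm_step:
  assumes "symm C" "\<And>i. symm (A i)"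
  shows "symm (admm_step A b C \<sigma> Z)"
proof -
  have "symm (projPSD Z)"
    using psd_projPSD unfolding psd_def by blast
  then show ?thesis
    unfolding admm_step_def Pop_def by (intro symm_add symm_diff symm_scaleR symm_Astar assms)
qed

lemma continuous_on_admm_step: "continuous_on S (admm_step A b C \<sigma>)"
proof -
  have "continuous_on UNIV (Pop A)"
    by (rule linear_continuous_on) (simp add: linear_Pop flip: linear_conv_bounded_linear)
  then have "continuous_on S (\<lambda>Z. Pop A (- 2 *\<^sub>R projPSD Z + Z))"
    by (rule continuous_on_compose2) (auto intro!: continuous_intros continuous_on_projPSD)
  then show ?thesis
    unfolding admm_step_def[abs_def] by (intro continuous_intros continuous_on_projPSD)
qed

lemma admm_step_diff:
  assumes "R = projPSD Z' - projPSD Z - Dop Q lam (Z' - Z)"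
  shows "admm_step A b C \<sigma> Z' - admm_step A b C \<sigma> Z = Mop A Q lam (Z' - Z) + (R - 2 *\<^sub>R Pop A R)"
proof -
  interpret P: linear "Pop A"
    by (rule linear_Pop)
  have "admm_step A b C \<sigma> Z' - admm_step A b C \<sigma> Z
      = Pop A (Z' - Z) - 2 *\<^sub>R Pop A (projPSD Z' - projPSD Z) + (projPSD Z' - projPSD Z)"
    by (simp add: admm_step_def P.add P.diff P.scale algebra_simps)
  also have "\<dots> = Mop A Q lam (Z' - Z) + (R - 2 *\<^sub>R Pop A R)"
    unfolding assms by (simp add: Mop_def P.add P.diff P.scale scaleR_diff_right) (simp add: scaleR_2)
  finally show ?thesis .
qed

lemma admm_step_quadratic_error:
  fixes Q :: "real^'n^'n"
  assumes Q: "orthogonal_matrix Q" and lam: "\<And>i. lam i \<noteq> 0"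
    and Zs: "Zs = Q ** diagm lam ** transpose Q" and fixed: "admm_step A b C \<sigma> Zs = Zs"
  obtains c where "\<And>H. symm H \<Longrightarrow>
    norm (admm_step A b C \<sigma> (Zs + H) - Zs) \<le> opnorm_sym (Mop A Q lam) * norm H + c * (norm H)\<^sup>2"
proof -
  define m where "m = Min (range (\<lambda>i. \<bar>lam i\<bar>))"
  have m: "0 < m" "\<And>i. m \<le> \<bar>lam i\<bar>"
    using lam by (auto simp: m_def)
  obtain cP where cP: "0 \<le> cP" "\<And>X. norm (Pop A X) \<le> norm X * cP"
    using bounded_linear.nonneg_bounded linear_Pop linear_conv_bounded_linear by metis
  show thesis
  proof (rule that)
    fix H :: "real^'n^'n"
    assume H: "symm H"
    define R where "R = projPSD (Zs + H) - projPSD Zs - Dop Q lam H"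
    have R: "norm R \<le> 2 * (norm H)\<^sup>2 / m"
      using projPSD_second_order[OF Q lam m H] by (simp add: R_def Zs projPSD_eigen[OF Q])
    have "admm_step A b C \<sigma> (Zs + H) - Zs = Mop A Q lam H + (R - 2 *\<^sub>R Pop A R)"
      using admm_step_diff[of R "Zs + H" Zs Q lam A b C \<sigma>] by (simp add: R_def fixed)
    then have "norm (admm_step A b C \<sigma> (Zs + H) - Zs)
        \<le> norm (Mop A Q lam H) + (norm R + 2 * norm (Pop A R))"
      using norm_triangle_ineq[of "Mop A Q lam H" "R - 2 *\<^sub>R Pop A R"]
        norm_triangle_ineq4[of R "2 *\<^sub>R Pop A R"] by simp
    also have "\<dots> \<le> opnorm_sym (Mop A Q lam) * norm H + (1 + 2 * cP) * norm R"
      using norm_le_opnorm_sym[OF linear_Mop H, of A Q lam] cP(2)[of R] by (simp add: algebra_simps)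
    also have "\<dots> \<le> opnorm_sym (Mop A Q lam) * norm H + ((1 + 2 * cP) * (2 / m)) * (norm H)\<^sup>2"
      using mult_left_mono[OF R, of "1 + 2 * cP"] cP(1) m(1) by (simp add: field_simps)
    finally show "norm (admm_step A b C \<sigma> (Zs + H) - Zs)
        \<le> opnorm_sym (Mop A Q lam) * norm H + (1 + 2 * cP) * (2 / m) * (norm H)\<^sup>2" .
  qed
qed

theorem theorem3:
  fixes A :: "'m::finite \<Rightarrow> real^'n^'n" and b :: "real^'m" and C :: "real^'n^'n"
    and \<sigma> :: real and Z :: "nat \<Rightarrow> real^'n^'n"
    and Xs Ss Q :: "real^'n^'n" and ys :: "real^'m" and lam :: "'n \<Rightarrow> real" and \<rho> :: real
  assumes symC: "symm C"
    and symA: "\<forall>i. symm (A i)"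
    and surjA: "\<forall>v. \<exists>X. symm X \<and> Aop A X = v"
    and KKT_nonempty: "\<exists>X y S. KKT A b C X y S"
    and sigma_pos: "0 < \<sigma>"
    and Z0: "symm (Z 0)"
    and iter: "\<forall>k. Z (Suc k) = admm_step A b C \<sigma> (Z k)"
    and kkt: "KKT A b C Xs ys Ss"
    and strict_compl: "rank Xs + rank Ss = CARD('n)"
    and conv: "Z \<longlonglongrightarrow> Xs - \<sigma> *\<^sub>R Ss"
    and orthQ: "orthogonal_matrix Q"
    and lam_nz: "\<forall>i. lam i \<noteq> 0"
    and Zs_eig: "Xs - \<sigma> *\<^sub>R Ss = Q ** diagm lam ** transpose Q"
    and Xs_eig: "Xs = Q ** diagm (\<lambda>i. if 0 < lam i then lam i else 0) ** transpose Q"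
    and Ss_eig: "\<sigma> *\<^sub>R Ss = Q ** diagm (\<lambda>i. if lam i < 0 then - lam i else 0) ** transpose Q"
    and primal_nondeg: "NX Q lam \<inter> range (Astar A) = {0}"
    and dual_nondeg: "NS Q lam \<inter> {X. symm X \<and> Aop A X = 0} = {0}"
    and rho: "opnorm_sym (Mop A Q lam) < \<rho>" "\<rho> < 1"
  shows "\<exists>kbar::nat. \<forall>k\<ge>kbar.
           norm (Z (Suc k) - (Xs - \<sigma> *\<^sub>R Ss)) \<le> \<rho> * norm (Z k - (Xs - \<sigma> *\<^sub>R Ss))"
proof -
  define Zs where "Zs = Xs - \<sigma> *\<^sub>R Ss"
  have fixed: "admm_step A b C \<sigma> Zs = Zs"
    unfolding Zs_def
    by (rule fixed_point_of_convergent_orbit[OF continuous_on_admm_step _ conv]) (use iter in simp)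
  obtain c where c: "\<And>H. symm H \<Longrightarrow>
      norm (admm_step A b C \<sigma> (Zs + H) - Zs) \<le> opnorm_sym (Mop A Q lam) * norm H + c * (norm H)\<^sup>2"
    using admm_step_quadratic_error[OF orthQ _ _ fixed] lam_nz Zs_eig by (auto simp: Zs_def)
  have symm_Z: "symm (Z k)" for k
    by (induction k) (simp_all add: Z0 iter symm_admm_step symC symA)
  have "symm Zs"
    unfolding Zs_def Zs_eig by (intro symm_conj) (simp add: symm_def transpose_diagm)
  have "norm (Z (Suc k) - Zs) \<le> opnorm_sym (Mop A Q lam) * norm (Z k - Zs) + c * (norm (Z k - Zs))\<^sup>2" for k
    using c[OF symm_diff[OF symm_Z \<open>symm Zs\<close>]] iter by simp
  then have "\<exists>N. \<forall>k\<ge>N. norm (Z (Suc k) - Zs) \<le> \<rho> * norm (Z k - Zs)"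
    by (rule eventually_contraction_of_quadratic_error[OF conv[folded Zs_def] rho(1)])
  then show ?thesis
    by (simp add: Zs_def)
qed

end
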